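(* Let $\ell\ge 0$ be an integer and let $A$ be the operator on $L^2(0,1)$ given by $Aw = w^{(2\ell+1)}$ with domain $D(A)=\{w\in H^{2\ell+1}(0,1) : w^{(k)}(0)=w^{(k)}(1) \text{ for all } k=0,\dots,2\ell\}$. Then: (a) there is $\varepsilon>0$ such that $(0,\varepsilon)\subseteq\rho(A)$ and $R(\mu,A)\succeq \mathbb{1}\otimes\mathbb{1}$ for all $\mu\in(0,\varepsilon)$; (b) there is $\varepsilon>0$ such that $(-\varepsilon,0)\subseteq\rho(A)$ and $R(\mu,A)\preceq -\mathbb{1}\otimes\mathbb{1}$ for all $\mu\in(-\varepsilon,0)$. If $\ell=0$, assertion (a) holds for all $\mu\in(0,\infty)$ and assertion (b) holds for all $\mu\in(-\infty,0)$.
   Context: $\mathbb{1}$ is the constant function $1$ on $(0,1)$ and $\mathbb{1}\otimes\mathbb{1}$ is the operator $f\mapsto \big(\int_0^1 f(y)\,dy\big)\mathbb{1}$ on $L^2(0,1)$. $R(\mu,A)=(\mu-A)^{-1}$. For bounded real operators $T,S$ on $L^2(0,1)$, $T\succeq S$ (equivalently $S \preceq T$) means there is $c>0$ such that $T-cS$ maps nonnegative functions to nonnegative functions. *)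

theory Defs
  imports "HOL-Analysis.Analysis"
begin

text \<open>All function spaces are over the real scalar field on the interval (0,1);
  elements of L2(0,1) are represented by functions real => real, identified
  almost everywhere on [0,1] (the endpoints form a null set).\<close>

definition L2 :: "(real \<Rightarrow> real) \<Rightarrow> bool" where
  "L2 f \<longleftrightarrow> f \<in> borel_measurable (lebesgue_on {0..1}) \<and>
     integrable (lebesgue_on {0..1}) (\<lambda>x. (f x)^2)"

definition L2norm :: "(real \<Rightarrow> real) \<Rightarrow> real" where
  "L2norm f = sqrt (integral\<^sup>L (lebesgue_on {0..1}) (\<lambda>x. (f x)^2))"

text \<open>Sobolev space H^m(0,1) (one-dimensional): w has derivatives d 0 = w, d 1, ..., d m,
  where d k (k < m) is the absolutely continuous representative,
  d k x = d k 0 + int_0^x d (k+1), and d m is in L2(0,1).\<close>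

definition sob_rep :: "nat \<Rightarrow> (real \<Rightarrow> real) \<Rightarrow> (nat \<Rightarrow> real \<Rightarrow> real) \<Rightarrow> bool" where
  "sob_rep m w d \<longleftrightarrow> d 0 = w \<and>
     (\<forall>k<m. integrable (lebesgue_on {0..1}) (d (Suc k)) \<and>
        (\<forall>x\<in>{0..1}. d k x = d k 0 + integral\<^sup>L (lebesgue_on {0..x}) (d (Suc k)))) \<and>
     L2 (d m)"

text \<open>Domain of A w = w^(2l+1): w in H^(2l+1)(0,1) with periodic boundary conditions
  w^(k)(0) = w^(k)(1) for k = 0..2l; d (2l+1) is A w.\<close>

definition domA :: "nat \<Rightarrow> (real \<Rightarrow> real) \<Rightarrow> (nat \<Rightarrow> real \<Rightarrow> real) \<Rightarrow> bool" where
  "domA l w d \<longleftrightarrow> sob_rep (2*l+1) w d \<and> (\<forall>k\<le>2*l. d k 0 = d k 1)"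

definition res_eq :: "nat \<Rightarrow> real \<Rightarrow> (real \<Rightarrow> real) \<Rightarrow> (nat \<Rightarrow> real \<Rightarrow> real) \<Rightarrow> (real \<Rightarrow> real) \<Rightarrow> bool" where
  "res_eq l \<mu> w d f \<longleftrightarrow> domA l w d \<and>
     (AE x in lebesgue_on {0..1}. \<mu> * w x - d (2*l+1) x = f x)"

definition resolvent_set :: "nat \<Rightarrow> real set" where
  "resolvent_set l = {\<mu>.
     (\<forall>f. L2 f \<longrightarrow> (\<exists>w d. res_eq l \<mu> w d f)) \<and>
     (\<forall>w d. res_eq l \<mu> w d (\<lambda>_. 0) \<longrightarrow> (AE x in lebesgue_on {0..1}. w x = 0)) \<and>
     (\<exists>C. \<forall>f w d. L2 f \<and> res_eq l \<mu> w d f \<longrightarrow> L2norm w \<le> C * L2norm f)}"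

text \<open>The resolvent R(mu,A) f (meaningful for mu in the resolvent set and f in L2).\<close>

definition Res :: "nat \<Rightarrow> real \<Rightarrow> (real \<Rightarrow> real) \<Rightarrow> (real \<Rightarrow> real)" where
  "Res l \<mu> f = (SOME w. \<exists>d. res_eq l \<mu> w d f)"

definition one_tensor_one :: "(real \<Rightarrow> real) \<Rightarrow> (real \<Rightarrow> real)" where
  "one_tensor_one f = (\<lambda>x. integral\<^sup>L (lebesgue_on {0..1}) f)"

definition op_ge :: "((real \<Rightarrow> real) \<Rightarrow> (real \<Rightarrow> real)) \<Rightarrow> ((real \<Rightarrow> real) \<Rightarrow> (real \<Rightarrow> real)) \<Rightarrow> bool" where
  "op_ge T S \<longleftrightarrow> (\<exists>c>0. \<forall>f. L2 f \<and> (AE x in lebesgue_on {0..1}. f x \<ge> 0) \<longrightarrow>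
     (AE x in lebesgue_on {0..1}. T f x - c * S f x \<ge> 0))"

end

theory Submission
  imports Defs
begin

(* For small |mu| the resolvent is a perturbation of an average.  A function w in D(A) has
   n = 2l+1 periodic derivatives, so its derivatives of order 1..n all have mean zero, and
   iterating sup |g| <= 2 ||g'||_1 for mean-zero g gives |w - mean w| <= 2^n ||A w||_1.
   If mu w - A w = f then mean w = mean f / mu, and for 2^n |mu| <= 1/2 this yields
   |w - mean f / mu| <= 2^(n+2) ||f||_1.  Hence R(mu,A) f is uniformly close to the constant
   mean f / mu, which dominates +-(mean f) once |mu| is small: this gives both the resolvent
   bound and the comparison with 1 (x) 1.  Solutions come from the Neumann series
   w = mean f / mu - sum_k mu^k V^(n(k+1)) (f - mean f), V the mean-zero primitive.

   For l = 0 the periodic problem w' = mu w - f is solved by variation of constants for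
   every mu <> 0.  If f >= 0 then exp(-mu t) w(t) is nonincreasing, and periodicity turns
   this into the Harnack inequality w(y) <= exp(mu) w(x); integrating in one variable
   compares w with mean w = mean f / mu. *)

section \<open>Integration on the unit interval\<close>

abbreviation integrable01 :: "(real \<Rightarrow> real) \<Rightarrow> bool" where
  "integrable01 h \<equiv> integrable (lebesgue_on {0..1}) h"

abbreviation prim :: "(real \<Rightarrow> real) \<Rightarrow> real \<Rightarrow> real" where
  "prim h x \<equiv> integral\<^sup>L (lebesgue_on {0..x}) h"

abbreviation L1norm :: "(real \<Rightarrow> real) \<Rightarrow> real" where
  "L1norm h \<equiv> integral\<^sup>L (lebesgue_on {0..1}) (\<lambda>y. \<bar>h y\<bar>)"

lemma measure_lebesgue_on_01 [simp]: "measure (lebesgue_on {0..1::real}) {0..1} = 1"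
  by (simp add: measure_restrict_space)

lemma integrable01_const [simp]: "integrable01 (\<lambda>x. c)"
  by (rule continuous_imp_integrable_real) simp

lemma integrable01_subinterval:
  assumes "integrable01 h" "0 \<le> a" "b \<le> 1"
  shows "integrable (lebesgue_on {a..b}) h"
  by (rule integrable_subinterval[OF assms(1)]) (use assms in auto)

lemma prim_eq_integral:
  assumes "integrable01 h" "x \<in> {0..1}"
  shows "prim h x = integral {0..x} h"
  using assms by (intro lebesgue_integral_eq_integral integrable01_subinterval[OF assms(1)]) auto

lemma prim_0: "prim h 0 = 0"
  by (rule integral_eq_zero_null_sets) simp

lemma continuous_on_prim:
  assumes "integrable01 h"
  shows "continuous_on {0..1} (prim h)"
proof -
  have "continuous_on {0..1} (\<lambda>x. integral {0..x} h)"
    by (rule indefinite_integral_continuous_1) (simp add: integrable_on_lebesgue_on assms)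
  then show ?thesis by (rule continuous_on_eq) (simp add: prim_eq_integral assms)
qed

lemma abs_prim_le_L1norm:
  assumes "integrable01 h" "x \<in> {0..1}"
  shows "\<bar>prim h x\<bar> \<le> L1norm h"
proof -
  have "\<bar>prim h x\<bar> \<le> prim (\<lambda>y. \<bar>h y\<bar>) x"
    by (rule integral_abs_bound)
  also have "\<dots> \<le> L1norm h"
    by (rule integral_mono_lebesgue_on_AE) (use assms in \<open>auto intro: integrable_abs\<close>)
  finally show ?thesis .
qed

lemma L1norm_le:
  assumes "integrable01 g" "\<And>x. x \<in> {0..1} \<Longrightarrow> \<bar>g x\<bar> \<le> B"
  shows "L1norm g \<le> B"
proof -
  have "L1norm g \<le> integral\<^sup>L (lebesgue_on {0..1}) (\<lambda>y::real. B)"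
    by (rule integral_mono) (use assms in \<open>auto intro: integrable_abs\<close>)
  then show ?thesis by simp
qed

lemma L2_imp_integrable01: "L2 f \<Longrightarrow> integrable01 f"
  unfolding L2_def
  by (auto intro!: finite_measure.square_integrable_imp_integrable[OF finite_measure_lebesgue_on])

lemma L1norm_le_L2norm:
  assumes "L2 f"
  shows "L1norm f \<le> L2norm f"
proof -
  define m where "m = L1norm f"
  define q where "q = integral\<^sup>L (lebesgue_on {0..1}) (\<lambda>x. (f x)\<^sup>2)"
  have sq: "integrable01 (\<lambda>x. (f x)\<^sup>2)" using assms unfolding L2_def by simp
  have af: "integrable01 (\<lambda>x. \<bar>f x\<bar>)" by (intro integrable_abs L2_imp_integrable01 assms)
  have "(\<lambda>x. (\<bar>f x\<bar> - m)\<^sup>2) = (\<lambda>x. ((f x)\<^sup>2 - 2 * m * \<bar>f x\<bar>) + m\<^sup>2)"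
    by (auto simp: power2_diff)
  moreover have "integral\<^sup>L (lebesgue_on {0..1}) (\<lambda>x. ((f x)\<^sup>2 - 2 * m * \<bar>f x\<bar>) + m\<^sup>2)
      = q - 2 * m * m + m\<^sup>2"
    using sq af unfolding m_def q_def
    by (simp add: Bochner_Integration.integral_add Bochner_Integration.integral_diff)
  moreover have "0 \<le> integral\<^sup>L (lebesgue_on {0..1}) (\<lambda>x. (\<bar>f x\<bar> - m)\<^sup>2)"
    by (rule integral_nonneg_AE) simp
  ultimately have "m\<^sup>2 \<le> q"
    by (simp add: power2_eq_square)
  then show ?thesis
    unfolding L2norm_def m_def[symmetric] q_def[symmetric] by (rule real_le_rsqrt)
qed

lemma AE_lebesgue_on_subinterval:
  assumes "AE x in lebesgue_on {0..1}. P x" "0 \<le> a" "b \<le> (1::real)"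
  shows "AE x in lebesgue_on {a..b}. P x"
proof -
  have "AE x in lebesgue. x \<in> {0..1} \<longrightarrow> P x"
    using assms(1) by (subst (asm) AE_restrict_space_iff) simp_all
  then have "AE x in lebesgue. x \<in> {a..b} \<longrightarrow> P x"
    by eventually_elim (use assms in auto)
  then show ?thesis by (subst AE_restrict_space_iff) simp_all
qed

lemma continuous_on_if_prim:
  assumes "integrable01 h" and "\<And>y. y \<in> {0..1} \<Longrightarrow> prim h y = g y - g 0"
  shows "continuous_on {0..1} g"
proof -
  have "continuous_on {0..1} (\<lambda>y. g 0 + prim h y)"
    by (intro continuous_intros continuous_on_prim assms(1))
  then show ?thesis by (rule continuous_on_eq) (simp add: assms(2))
qed

lemma L1norm_diff_const_le:
  assumes "integrable01 f"
  shows "L1norm (\<lambda>y. f y - c) \<le> L1norm f + \<bar>c\<bar>"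
proof -
  have "L1norm (\<lambda>y. f y - c) \<le> integral\<^sup>L (lebesgue_on {0..1}) (\<lambda>y. \<bar>f y\<bar> + \<bar>c\<bar>)"
    using assms by (intro integral_mono) (auto simp: abs_triangle_ineq4)
  also have "\<dots> = L1norm f + \<bar>c\<bar>"
    using assms by (simp add: Bochner_Integration.integral_add)
  finally show ?thesis .
qed

lemma L1norm_eq_integral_if_nonneg:
  assumes "integrable01 f" "AE x in lebesgue_on {0..1}. 0 \<le> f x"
  shows "L1norm f = prim f 1"
proof (rule integral_cong_AE)
  show "AE x in lebesgue_on {0..1}. \<bar>f x\<bar> = f x"
    using assms(2) by eventually_elim simp
qed (use assms(1) in \<open>auto intro: borel_measurable_integrable\<close>)

lemma prim_mono_if_nonneg:
  assumes f: "integrable01 f" and pos: "AE x in lebesgue_on {0..1}. 0 \<le> f x"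
    and st: "0 \<le> s" "s \<le> t" "t \<le> 1"
  shows "prim f s \<le> prim f t"
proof (rule integral_mono_lebesgue_on_AE)
  show "integrable (lebesgue_on {0..t}) f" by (rule integrable01_subinterval[OF f]) (use st in auto)
  show "AE x in lebesgue_on {0..t}. 0 \<le> f x" by (rule AE_lebesgue_on_subinterval[OF pos]) (use st in auto)
qed (use st in auto)

lemma L2norm_le:
  assumes "continuous_on {0..1} w" and "\<And>x. x \<in> {0..1} \<Longrightarrow> \<bar>w x\<bar> \<le> K"
  shows "L2norm w \<le> K"
proof -
  have K: "0 \<le> K" using assms(2)[of 0] by simp
  have "integral\<^sup>L (lebesgue_on {0..1}) (\<lambda>x. (w x)\<^sup>2) \<le> L1norm (\<lambda>x. (w x)\<^sup>2)"
    by simp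
  also have "\<dots> \<le> K\<^sup>2"
  proof (rule L1norm_le)
    show "integrable01 (\<lambda>x. (w x)\<^sup>2)"
      by (intro continuous_imp_integrable_real continuous_intros assms(1))
    show "\<bar>(w x)\<^sup>2\<bar> \<le> K\<^sup>2" if "x \<in> {0..1}" for x
      using power_mono[OF assms(2)[OF that] abs_ge_zero, of 2] by simp
  qed
  finally show ?thesis
    unfolding L2norm_def using K by (intro real_le_lsqrt)
qed

lemma L2_diff_continuous:
  assumes f: "L2 f" and h: "continuous_on {0..1} h"
  shows L2_diff_continuous_left: "L2 (\<lambda>x. h x - f x)"
    and L2_diff_continuous_right: "L2 (\<lambda>x. f x - h x)"
proof -
  obtain B where B: "\<And>x. x \<in> {0..1} \<Longrightarrow> \<bar>h x\<bar> \<le> B"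
    using continuous_on_compact_bound[OF compact_Icc h] by auto
  have hf: "integrable01 (\<lambda>x. h x - f x)"
    using continuous_imp_integrable_real[OF h] L2_imp_integrable01[OF f] by simp
  have sq: "integrable01 (\<lambda>x. (f x)\<^sup>2)" using f unfolding L2_def by simp
  have "integrable01 (\<lambda>x. (h x - f x)\<^sup>2)"
  proof (rule Bochner_Integration.integrable_bound)
    show "integrable01 (\<lambda>x. 2 * B\<^sup>2 + 2 * (f x)\<^sup>2)"
      using sq by simp
    show "(\<lambda>x. (h x - f x)\<^sup>2) \<in> borel_measurable (lebesgue_on {0..1})"
      using borel_measurable_integrable[OF hf] by measurable
    have "(h x - f x)\<^sup>2 \<le> 2 * B\<^sup>2 + 2 * (f x)\<^sup>2" if "x \<in> {0..1}" for x
    proof -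
      have "(h x)\<^sup>2 \<le> B\<^sup>2" using power_mono[OF B[OF that] abs_ge_zero, of 2] by simp
      moreover have "0 \<le> (h x + f x)\<^sup>2" by simp
      ultimately show ?thesis by (simp add: power2_eq_square algebra_simps)
    qed
    then show "AE x in lebesgue_on {0..1}. norm ((h x - f x)\<^sup>2) \<le> norm (2 * B\<^sup>2 + 2 * (f x)\<^sup>2)"
      by (intro AE_I2) simp
  qed
  then show "L2 (\<lambda>x. h x - f x)" unfolding L2_def using borel_measurable_integrable[OF hf] by simp
  moreover have "(\<lambda>x. (f x - h x)\<^sup>2) = (\<lambda>x. (h x - f x)\<^sup>2)"
    by (rule ext) (rule power2_commute)
  moreover have "integrable01 (\<lambda>x. f x - h x)"
    using continuous_imp_integrable_real[OF h] L2_imp_integrable01[OF f] by simp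
  ultimately show "L2 (\<lambda>x. f x - h x)"
    unfolding L2_def by (simp add: borel_measurable_integrable)
qed

lemma L2_cong:
  assumes "L2 f" and "\<And>x. x \<in> {0..1} \<Longrightarrow> f x = g x"
  shows "L2 g"
proof -
  have "f \<in> borel_measurable (lebesgue_on {0..1})" "integrable01 (\<lambda>x. (f x)\<^sup>2)"
    using assms(1) unfolding L2_def by auto
  moreover have "f \<in> borel_measurable (lebesgue_on {0..1}) \<longleftrightarrow> g \<in> borel_measurable (lebesgue_on {0..1})"
    by (rule measurable_cong) (simp add: assms(2))
  moreover have "integrable01 (\<lambda>x. (f x)\<^sup>2) \<longleftrightarrow> integrable01 (\<lambda>x. (g x)\<^sup>2)"
    by (rule Bochner_Integration.integrable_cong) (simp_all add: assms(2))
  ultimately show ?thesis unfolding L2_def by simp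
qed

lemma abs_le_2_L1norm_if_mean_zero:
  assumes h: "integrable01 h" and g: "\<And>y. y \<in> {0..1} \<Longrightarrow> prim h y = g y - g 0"
    and mean: "prim g 1 = 0" and x: "x \<in> {0..1}"
  shows "\<bar>g x\<bar> \<le> 2 * L1norm h"
proof -
  have Ih: "integrable01 (prim h)"
    by (intro continuous_imp_integrable_real continuous_on_prim h)
  have "prim (prim h) 1 = prim (\<lambda>y. g y - g 0) 1"
    by (rule Bochner_Integration.integral_cong[OF refl]) (simp add: g)
  also have "\<dots> = - g 0"
    using continuous_imp_integrable_real[OF continuous_on_if_prim[OF h g]] mean
    by (simp add: Bochner_Integration.integral_diff)
  finally have g0: "g 0 = - prim (prim h) 1" by simp
  have "\<bar>prim (prim h) 1\<bar> \<le> L1norm (prim h)" by (rule integral_abs_bound)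
  also have "\<dots> \<le> L1norm h" by (rule L1norm_le[OF Ih abs_prim_le_L1norm[OF h]])
  finally have "\<bar>g 0\<bar> \<le> L1norm h" using g0 by simp
  moreover have "\<bar>prim h x\<bar> \<le> L1norm h" by (rule abs_prim_le_L1norm[OF h x])
  ultimately show ?thesis using g[OF x] by linarith
qed

section \<open>The domain of \<open>A\<close> and the resolvent equation\<close>

(* The relation between consecutive derivatives is oriented with the primitive on the left:
   the form d k y = d k 0 + ... of the definition makes the simplifier loop at y = 0. *)
lemma domAD:
  assumes "domA l w d"
  shows domA_base: "d 0 = w"
    and domA_integrable: "k < 2*l+1 \<Longrightarrow> integrable01 (d (Suc k))"
    and domA_prim: "k < 2*l+1 \<Longrightarrow> y \<in> {0..1} \<Longrightarrow> prim (d (Suc k)) y = d k y - d k 0"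
    and domA_periodic: "k \<le> 2*l \<Longrightarrow> d k 0 = d k 1"
proof -
  have sob: "sob_rep (2*l+1) w d" and per: "\<forall>k\<le>2*l. d k 0 = d k 1"
    using assms unfolding domA_def by auto
  then show "d 0 = w" "k \<le> 2*l \<Longrightarrow> d k 0 = d k 1"
    unfolding sob_rep_def by blast+
  assume k: "k < 2*l+1"
  then show "integrable01 (d (Suc k))" using sob unfolding sob_rep_def by blast
  assume "y \<in> {0..1}"
  then have "d k y = d k 0 + prim (d (Suc k)) y" using sob k unfolding sob_rep_def by blast
  then show "prim (d (Suc k)) y = d k y - d k 0" by linarith
qed

lemma res_eqI:
  assumes "d 0 = w"
    and "\<And>k. k < 2*l+1 \<Longrightarrow> integrable01 (d (Suc k))"
    and "\<And>k y. k < 2*l+1 \<Longrightarrow> y \<in> {0..1} \<Longrightarrow> prim (d (Suc k)) y = d k y - d k 0"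
    and "\<And>k. k \<le> 2*l \<Longrightarrow> d k 0 = d k 1"
    and "L2 (d (2*l+1))"
    and "\<And>x. x \<in> {0..1} \<Longrightarrow> \<mu> * w x - d (2*l+1) x = f x"
  shows "res_eq l \<mu> w d f"
  unfolding res_eq_def domA_def sob_rep_def using assms by (auto intro: AE_I2)

lemma domA_mean_zero:
  assumes "domA l w d" "1 \<le> j" "j \<le> 2*l+1"
  shows "prim (d j) 1 = 0"
proof -
  obtain k where j: "j = Suc k" using assms(2) by (cases j) auto
  have "prim (d j) 1 = d k 1 - d k 0"
    using domA_prim[OF assms(1), of k] assms(3) j by simp
  moreover have "d k 0 = d k 1" using domA_periodic[OF assms(1)] assms(3) j by simp
  ultimately show ?thesis by simp
qed

lemma domA_continuous:
  assumes "domA l w d"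
  shows "continuous_on {0..1} w"
proof -
  have "continuous_on {0..1} (d 0)"
    using domA_integrable[OF assms, of 0] domA_prim[OF assms, of 0]
    by (intro continuous_on_if_prim[of "d 1"]) auto
  then show ?thesis using domA_base[OF assms] by simp
qed

lemma res_eq_domA: "res_eq l \<mu> w d f \<Longrightarrow> domA l w d"
  unfolding res_eq_def by simp

lemma res_eq_top_derivative:
  "res_eq l \<mu> w d f \<Longrightarrow> AE x in lebesgue_on {0..1}. d (2*l+1) x = \<mu> * w x - f x"
  unfolding res_eq_def by (auto elim: AE_mp)

lemma res_eq_mean:
  assumes sol: "res_eq l \<mu> w d f" and f: "L2 f" and \<mu>: "\<mu> \<noteq> 0"
  shows "prim w 1 = prim f 1 / \<mu>"
proof -
  note dom = res_eq_domA[OF sol]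
  have Iw: "integrable01 w" by (intro continuous_imp_integrable_real domA_continuous[OF dom])
  have If: "integrable01 f" by (rule L2_imp_integrable01[OF f])
  have "0 = prim (d (2*l+1)) 1" using domA_mean_zero[OF dom] by simp
  also have "\<dots> = prim (\<lambda>x. \<mu> * w x - f x) 1"
    using res_eq_top_derivative[OF sol] domA_integrable[OF dom, of "2*l"] Iw If
    by (intro integral_cong_AE) (auto intro: borel_measurable_integrable)
  also have "\<dots> = \<mu> * prim w 1 - prim f 1"
    using Iw If by (simp add: Bochner_Integration.integral_diff)
  finally show ?thesis using \<mu> by (simp add: field_simps)
qed

lemma resolvent_setI:
  assumes exists: "\<And>f. L2 f \<Longrightarrow> \<exists>w d. res_eq l \<mu> w d f" and C: "0 \<le> C"
    and bound: "\<And>f w d x. L2 f \<Longrightarrow> res_eq l \<mu> w d f \<Longrightarrow> x \<in> {0..1} \<Longrightarrow> \<bar>w x\<bar> \<le> C * L1norm f"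
  shows "\<mu> \<in> resolvent_set l"
  unfolding resolvent_set_def
proof (intro CollectI conjI allI impI exI[of _ C])
  show "\<exists>w d. res_eq l \<mu> w d f" if "L2 f" for f
    using exists[OF that] .
  have L2_0: "L2 (\<lambda>_. 0)" unfolding L2_def by simp
  show "AE x in lebesgue_on {0..1}. w x = 0" if "res_eq l \<mu> w d (\<lambda>_. 0)" for w d
    using bound[OF L2_0 that] by (intro AE_I2) auto
  show "L2norm w \<le> C * L2norm f" if "L2 f \<and> res_eq l \<mu> w d f" for f w d
  proof (rule L2norm_le)
    show "continuous_on {0..1} w"
      using that by (intro domA_continuous res_eq_domA) blast
    show "\<bar>w x\<bar> \<le> C * L2norm f" if "x \<in> {0..1}" for x
      using bound[OF _ _ that] \<open>L2 f \<and> res_eq l \<mu> w d f\<close> L1norm_le_L2norm mult_left_mono[OF _ C]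
      by (meson order_trans)
  qed
qed

lemma Res_solves: "\<exists>w d. res_eq l \<mu> w d f \<Longrightarrow> \<exists>d. res_eq l \<mu> (Res l \<mu> f) d f"
  unfolding Res_def by (rule someI_ex[where P = "\<lambda>w. \<exists>d. res_eq l \<mu> w d f"])

lemma op_ge_Res_one_tensor_oneI:
  assumes exists: "\<And>f. L2 f \<Longrightarrow> \<exists>w d. res_eq l \<mu> w d f" and c: "c > 0"
    and lower: "\<And>f w d x. L2 f \<Longrightarrow> AE x in lebesgue_on {0..1}. 0 \<le> f x \<Longrightarrow>
      res_eq l \<mu> w d f \<Longrightarrow> x \<in> {0..1} \<Longrightarrow> c * prim f 1 \<le> w x"
  shows "op_ge (Res l \<mu>) one_tensor_one"
  unfolding op_ge_def
proof (intro exI[of _ c] conjI allI impI c)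
  fix f assume f: "L2 f \<and> (AE x in lebesgue_on {0..1}. 0 \<le> f x)"
  then obtain d where "res_eq l \<mu> (Res l \<mu> f) d f" using Res_solves exists by blast
  then show "AE x in lebesgue_on {0..1}. 0 \<le> Res l \<mu> f x - c * one_tensor_one f x"
    using lower f unfolding one_tensor_one_def by (intro AE_I2) force
qed

lemma op_ge_neg_one_tensor_one_ResI:
  assumes exists: "\<And>f. L2 f \<Longrightarrow> \<exists>w d. res_eq l \<mu> w d f" and c: "c > 0"
    and upper: "\<And>f w d x. L2 f \<Longrightarrow> AE x in lebesgue_on {0..1}. 0 \<le> f x \<Longrightarrow>
      res_eq l \<mu> w d f \<Longrightarrow> x \<in> {0..1} \<Longrightarrow> c * w x \<le> - prim f 1"
  shows "op_ge (\<lambda>f x. - one_tensor_one f x) (Res l \<mu>)"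
  unfolding op_ge_def
proof (intro exI[of _ c] conjI allI impI c)
  fix f assume f: "L2 f \<and> (AE x in lebesgue_on {0..1}. 0 \<le> f x)"
  then obtain d where "res_eq l \<mu> (Res l \<mu> f) d f" using Res_solves exists by blast
  then show "AE x in lebesgue_on {0..1}. 0 \<le> - one_tensor_one f x - c * Res l \<mu> f x"
    using upper f unfolding one_tensor_one_def by (intro AE_I2) force
qed

section \<open>An a priori estimate for small \<open>\<mu>\<close>\<close>

lemma domA_L1norm_derivative_le:
  assumes dom: "domA l w d" and j: "1 \<le> j" "j < 2*l+1"
  shows "L1norm (d j) \<le> 2 * L1norm (d (Suc j))"
proof (rule L1norm_le)
  show "integrable01 (d j)" using domA_integrable[OF dom, of "j - 1"] j by simp
  have "prim (d j) 1 = 0" using domA_mean_zero[OF dom] j by simp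
  then show "\<bar>d j x\<bar> \<le> 2 * L1norm (d (Suc j))" if "x \<in> {0..1}" for x
    using domA_integrable[OF dom j(2)] domA_prim[OF dom j(2)] that
    by (intro abs_le_2_L1norm_if_mean_zero) auto
qed

lemma domA_L1norm_first_derivative_le:
  assumes dom: "domA l w d"
  shows "L1norm (d 1) \<le> 2^(2*l) * L1norm (d (2*l+1))"
proof -
  have "L1norm (d (2*l+1-i)) \<le> 2^i * L1norm (d (2*l+1))" if "i \<le> 2*l" for i
    using that
  proof (induction i)
    case 0
    then show ?case by simp
  next
    case (Suc i)
    have "L1norm (d (2*l+1 - Suc i)) \<le> 2 * L1norm (d (Suc (2*l+1 - Suc i)))"
      by (rule domA_L1norm_derivative_le[OF dom]) (use Suc.prems in auto)
    also have "Suc (2*l+1 - Suc i) = 2*l+1-i" using Suc.prems by simp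
    also have "2 * L1norm (d (2*l+1-i)) \<le> 2 * (2^i * L1norm (d (2*l+1)))"
      using Suc by simp
    finally show ?case by simp
  qed
  from this[of "2*l"] show ?thesis by simp
qed

lemma domA_oscillation_le:
  assumes dom: "domA l w d" and x: "x \<in> {0..1}"
  shows "\<bar>w x - prim w 1\<bar> \<le> 2^(2*l+1) * L1norm (d (2*l+1))"
proof -
  have Iw: "integrable01 w" by (intro continuous_imp_integrable_real domA_continuous[OF dom])
  have "\<bar>w x - prim w 1\<bar> \<le> 2 * L1norm (d 1)"
  proof (rule abs_le_2_L1norm_if_mean_zero[OF _ _ _ x])
    show "integrable01 (d 1)" using domA_integrable[OF dom, of 0] by simp
    show "prim (d 1) y = (w y - prim w 1) - (w 0 - prim w 1)" if "y \<in> {0..1}" for y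
      using domA_prim[OF dom _ that, of 0] domA_base[OF dom] by simp
    show "prim (\<lambda>y. w y - prim w 1) 1 = 0"
      using Iw by (simp add: Bochner_Integration.integral_diff)
  qed
  also have "\<dots> \<le> 2 * (2^(2*l) * L1norm (d (2*l+1)))"
    using domA_L1norm_first_derivative_le[OF dom] by simp
  finally show ?thesis by simp
qed

lemma res_eq_L1norm_top_derivative_le:
  assumes sol: "res_eq l \<mu> w d f" and f: "L2 f"
  shows "L1norm (d (2*l+1)) \<le> \<bar>\<mu>\<bar> * L1norm (\<lambda>y. w y - c) + L1norm (\<lambda>y. f y - \<mu> * c)"
proof -
  note dom = res_eq_domA[OF sol]
  have Iw: "integrable01 (\<lambda>y. \<bar>w y - c\<bar>)"
    by (intro integrable_abs continuous_imp_integrable_real continuous_intros domA_continuous[OF dom])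
  have If: "integrable01 (\<lambda>y. \<bar>f y - \<mu> * c\<bar>)"
    using L2_imp_integrable01[OF f] by (intro integrable_abs) simp
  have "L1norm (d (2*l+1)) \<le> integral\<^sup>L (lebesgue_on {0..1}) (\<lambda>y. \<bar>\<mu>\<bar> * \<bar>w y - c\<bar> + \<bar>f y - \<mu> * c\<bar>)"
  proof (rule integral_mono_AE)
    show "integrable01 (\<lambda>y. \<bar>d (2*l+1) y\<bar>)"
      using domA_integrable[OF dom, of "2*l"] by (intro integrable_abs) simp
    show "integrable01 (\<lambda>y. \<bar>\<mu>\<bar> * \<bar>w y - c\<bar> + \<bar>f y - \<mu> * c\<bar>)"
      using Iw If by simp
    show "AE y in lebesgue_on {0..1}. \<bar>d (2*l+1) y\<bar> \<le> \<bar>\<mu>\<bar> * \<bar>w y - c\<bar> + \<bar>f y - \<mu> * c\<bar>"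
      using res_eq_top_derivative[OF sol]
    proof eventually_elim
      case (elim y)
      then have "d (2*l+1) y = \<mu> * (w y - c) - (f y - \<mu> * c)" by (simp add: algebra_simps)
      then show ?case by (simp add: abs_mult[symmetric] abs_triangle_ineq4)
    qed
  qed
  also have "\<dots> = \<bar>\<mu>\<bar> * L1norm (\<lambda>y. w y - c) + L1norm (\<lambda>y. f y - \<mu> * c)"
    using Iw If by (simp add: Bochner_Integration.integral_add)
  finally show ?thesis .
qed

(* v = w - mean f / mu has mean zero and A v = mu v - (f - mean f) almost everywhere, so the
   oscillation bound gives sup |v| <= 2^n (|mu| ||v||_1 + ||f - mean f||_1); the condition
   2^n |mu| <= 1/2 absorbs the first term. *)
lemma res_eq_apriori_small:
  assumes sol: "res_eq l \<mu> w d f" and f: "L2 f" and \<mu>: "\<mu> \<noteq> 0"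
    and small: "2^(2*l+1) * \<bar>\<mu>\<bar> \<le> 1/2" and x: "x \<in> {0..1}"
  shows "\<bar>w x - prim f 1 / \<mu>\<bar> \<le> 2^(2*l+3) * L1norm f"
proof -
  define n where "n = 2*l+1"
  define m where "m = prim f 1"
  define v where "v y = w y - m / \<mu>" for y
  define F where "F = L1norm (\<lambda>y. f y - m)"
  note dom = res_eq_domA[OF sol]
  have Iv: "integrable01 v"
    unfolding v_def by (intro continuous_imp_integrable_real continuous_intros domA_continuous[OF dom])
  have osc: "\<bar>v y\<bar> \<le> 2^n * (\<bar>\<mu>\<bar> * L1norm v + F)" if "y \<in> {0..1}" for y
  proof -
    have "\<bar>v y\<bar> \<le> 2^n * L1norm (d n)"
      using domA_oscillation_le[OF dom that] res_eq_mean[OF sol f \<mu>]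
      unfolding v_def m_def n_def by simp
    also have "\<dots> \<le> 2^n * (\<bar>\<mu>\<bar> * L1norm v + F)"
      using res_eq_L1norm_top_derivative_le[OF sol f, of "m / \<mu>"] \<mu>
      unfolding v_def F_def n_def by simp
    finally show ?thesis .
  qed
  have half: "2^n * (\<bar>\<mu>\<bar> * L1norm v) \<le> L1norm v / 2"
    using mult_right_mono[OF small, of "L1norm v"] by (simp add: n_def mult.assoc integral_nonneg_AE)
  have "L1norm v \<le> 2^n * (\<bar>\<mu>\<bar> * L1norm v + F)" by (rule L1norm_le[OF Iv osc])
  then have "L1norm v \<le> 2^(n+1) * F" using half by (simp add: algebra_simps)
  then have "\<bar>v x\<bar> \<le> 2^(n+1) * F" using osc[OF x] half by (simp add: algebra_simps)
  also have "F \<le> 2 * L1norm f"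
  proof -
    have "\<bar>m\<bar> \<le> L1norm f" unfolding m_def by (rule integral_abs_bound)
    then show ?thesis
      using L1norm_diff_const_le[OF L2_imp_integrable01[OF f], of m] unfolding F_def by simp
  qed
  finally show ?thesis unfolding v_def m_def n_def by (simp add: power_add mult_ac)
qed

section \<open>Solutions for small \<open>\<mu>\<close>: a Neumann series\<close>

definition mean_zero_prim :: "(real \<Rightarrow> real) \<Rightarrow> real \<Rightarrow> real" where
  "mean_zero_prim h x = prim h x - prim (prim h) 1"

context
  fixes h :: "real \<Rightarrow> real"
  assumes h: "integrable01 h"
begin

lemma continuous_on_mean_zero_prim: "continuous_on {0..1} (mean_zero_prim h)"
  unfolding mean_zero_prim_def by (intro continuous_intros continuous_on_prim h)

lemma integrable01_mean_zero_prim: "integrable01 (mean_zero_prim h)"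
  by (rule continuous_imp_integrable_real[OF continuous_on_mean_zero_prim])

lemma prim_eq_mean_zero_prim:
  "y \<in> {0..1} \<Longrightarrow> prim h y = mean_zero_prim h y - mean_zero_prim h 0"
  unfolding mean_zero_prim_def using prim_0[of h] by simp

lemma mean_zero_prim_mean_zero: "prim (mean_zero_prim h) 1 = 0"
proof -
  have "integrable01 (prim h)" by (intro continuous_imp_integrable_real continuous_on_prim h)
  then show ?thesis unfolding mean_zero_prim_def by (simp add: Bochner_Integration.integral_diff)
qed

lemma abs_mean_zero_prim_le: "x \<in> {0..1} \<Longrightarrow> \<bar>mean_zero_prim h x\<bar> \<le> 2 * L1norm h"
  by (rule abs_le_2_L1norm_if_mean_zero[OF h prim_eq_mean_zero_prim mean_zero_prim_mean_zero])

lemma mean_zero_prim_periodic: "prim h 1 = 0 \<Longrightarrow> mean_zero_prim h 1 = mean_zero_prim h 0"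
  using prim_eq_mean_zero_prim[of 1] by simp

end

context
  fixes g :: "real \<Rightarrow> real"
  assumes g: "integrable01 g"
begin

lemma integrable01_mean_zero_prim_iter: "integrable01 ((mean_zero_prim ^^ i) g)"
  by (induction i) (simp_all add: g integrable01_mean_zero_prim)

lemma L1norm_mean_zero_prim_iter_le: "L1norm ((mean_zero_prim ^^ i) g) \<le> 2^i * L1norm g"
proof (induction i)
  case (Suc i)
  note I = integrable01_mean_zero_prim_iter[of i]
  have "L1norm ((mean_zero_prim ^^ Suc i) g) \<le> 2 * L1norm ((mean_zero_prim ^^ i) g)"
    by (auto intro: L1norm_le integrable01_mean_zero_prim abs_mean_zero_prim_le I)
  then show ?case using Suc.IH by simp
qed simp

lemma abs_mean_zero_prim_iter_le:
  assumes "x \<in> {0..1}"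
  shows "\<bar>(mean_zero_prim ^^ Suc i) g x\<bar> \<le> 2^(Suc i) * L1norm g"
proof -
  have "\<bar>(mean_zero_prim ^^ Suc i) g x\<bar> \<le> 2 * L1norm ((mean_zero_prim ^^ i) g)"
    using abs_mean_zero_prim_le[OF integrable01_mean_zero_prim_iter assms] by simp
  then show ?thesis using L1norm_mean_zero_prim_iter_le[of i] by simp
qed

end

lemma summable_geometric_half: "summable (\<lambda>k. C * (1/2::real)^k)"
  by (intro summable_mult summable_geometric) simp

definition neumann_sum :: "(real \<Rightarrow> real) \<Rightarrow> real \<Rightarrow> nat \<Rightarrow> nat \<Rightarrow> real \<Rightarrow> real" where
  "neumann_sum g \<mu> n r y = (\<Sum>k. \<mu>^k * (mean_zero_prim ^^ (n*k + r)) g y)"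

context
  fixes g :: "real \<Rightarrow> real" and \<mu> :: real and n :: nat
  assumes g: "integrable01 g" "prim g 1 = 0" and n: "1 \<le> n" and small: "2^n * \<bar>\<mu>\<bar> \<le> 1/2"
begin

lemma neumann_weight_le: "\<bar>\<mu>\<bar>^k * 2^(n*k + r) \<le> 2^r * (1/2::real)^k"
proof -
  have "\<bar>\<mu>\<bar>^k * 2^(n*k + r) = 2^r * (2^n * \<bar>\<mu>\<bar>)^k"
    by (simp add: power_add power_mult power_mult_distrib)
  also have "\<dots> \<le> 2^r * (1/2)^k" by (intro mult_left_mono power_mono small) simp_all
  finally show ?thesis .
qed

lemma neumann_term_abs_le:
  assumes "1 \<le> n*k + r" "y \<in> {0..1}"
  shows "\<bar>\<mu>^k * (mean_zero_prim ^^ (n*k + r)) g y\<bar> \<le> 2^r * L1norm g * (1/2)^k"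
proof -
  obtain j where j: "n*k + r = Suc j" using assms(1) by (cases "n*k + r") auto
  have "\<bar>\<mu>^k * (mean_zero_prim ^^ (n*k + r)) g y\<bar> \<le> \<bar>\<mu>\<bar>^k * (2^(n*k + r) * L1norm g)"
    unfolding abs_mult power_abs j
    by (intro mult_left_mono abs_mean_zero_prim_iter_le g assms(2)) simp
  also have "\<dots> \<le> (2^r * (1/2)^k) * L1norm g"
    unfolding mult.assoc[symmetric] by (intro mult_right_mono neumann_weight_le) simp
  finally show ?thesis by (simp add: mult_ac)
qed

lemma neumann_term_L1norm_le:
  "L1norm (\<lambda>y. \<mu>^k * (mean_zero_prim ^^ (n*k + r)) g y) \<le> 2^r * L1norm g * (1/2)^k"
proof -
  have "L1norm (\<lambda>y. \<mu>^k * (mean_zero_prim ^^ (n*k + r)) g y)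
      = \<bar>\<mu>\<bar>^k * L1norm ((mean_zero_prim ^^ (n*k + r)) g)"
    by (simp add: abs_mult power_abs)
  also have "\<dots> \<le> \<bar>\<mu>\<bar>^k * (2^(n*k + r) * L1norm g)"
    by (intro mult_left_mono L1norm_mean_zero_prim_iter_le g) simp
  also have "\<dots> \<le> (2^r * (1/2)^k) * L1norm g"
    unfolding mult.assoc[symmetric] by (intro mult_right_mono neumann_weight_le) simp
  finally show ?thesis by (simp add: mult_ac)
qed

lemma summable_neumann_terms_abs:
  assumes "y \<in> {0..1}"
  shows "summable (\<lambda>k. \<bar>\<mu>^k * (mean_zero_prim ^^ (n*k + r)) g y\<bar>)"
proof (rule summable_comparison_test'[OF summable_geometric_half, of 1])
  fix k :: nat assume "1 \<le> k"
  then have "1 \<le> n*k + r" using n by (metis add_increasing2 le_add1 mult_le_mono nat_mult_1 order_trans zero_le)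
  then show "norm \<bar>\<mu>^k * (mean_zero_prim ^^ (n*k + r)) g y\<bar> \<le> 2^r * L1norm g * (1/2)^k"
    using neumann_term_abs_le[OF _ assms] by simp
qed

lemma
  assumes x: "x \<in> {0..1}"
  shows integrable_neumann_sum: "integrable (lebesgue_on {0..x}) (neumann_sum g \<mu> n r)"
    and prim_neumann_sum_eq_suminf:
      "prim (neumann_sum g \<mu> n r) x = (\<Sum>k. prim (\<lambda>y. \<mu>^k * (mean_zero_prim ^^ (n*k + r)) g y) x)"
proof -
  let ?t = "\<lambda>k y. \<mu>^k * (mean_zero_prim ^^ (n*k + r)) g y"
  have int: "integrable (lebesgue_on {0..x}) (?t k)" for k
    using x by (intro integrable01_subinterval[OF integrable_mult_right[OF integrable01_mean_zero_prim_iter[OF g(1)]]]) auto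
  have AE: "AE y in lebesgue_on {0..x}. summable (\<lambda>k. norm (?t k y))"
    using x summable_neumann_terms_abs by (intro AE_I2) auto
  have "summable (\<lambda>k. prim (\<lambda>y. norm (?t k y)) x)"
  proof (rule summable_comparison_test'[OF summable_geometric_half, of 0])
    fix k :: nat
    have "prim (\<lambda>y. norm (?t k y)) x \<le> L1norm (?t k)"
      unfolding real_norm_def using x g
      by (intro integral_mono_lebesgue_on_AE integrable_abs integrable_mult_right integrable01_mean_zero_prim_iter) auto
    then show "norm (prim (\<lambda>y. norm (?t k y)) x) \<le> 2^r * L1norm g * (1/2)^k"
      using neumann_term_L1norm_le[of k r] by (simp add: integral_nonneg_AE)
  qed
  then show "integrable (lebesgue_on {0..x}) (neumann_sum g \<mu> n r)"
    "prim (neumann_sum g \<mu> n r) x = (\<Sum>k. prim (?t k) x)"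
    unfolding neumann_sum_def using integrable_suminf[OF int AE] integral_suminf[OF int AE]
    by auto
qed

lemma integrable01_neumann_sum: "integrable01 (neumann_sum g \<mu> n r)"
  using integrable_neumann_sum[of 1] by simp

lemma prim_neumann_sum:
  assumes x: "x \<in> {0..1}"
  shows "prim (neumann_sum g \<mu> n r) x = neumann_sum g \<mu> n (Suc r) x - neumann_sum g \<mu> n (Suc r) 0"
proof -
  let ?t = "\<lambda>r k y. \<mu>^k * (mean_zero_prim ^^ (n*k + r)) g y"
  have sum: "summable (\<lambda>k. ?t (Suc r) k y)" if "y \<in> {0..1}" for y
    using summable_neumann_terms_abs[OF that] by (rule summable_rabs_cancel)
  have "prim (?t r k) x = ?t (Suc r) k x - ?t (Suc r) k 0" for k
    using prim_eq_mean_zero_prim[OF integrable01_mean_zero_prim_iter[OF g(1)] x, of "n*k + r"]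
    by (simp add: right_diff_distrib)
  then have "prim (neumann_sum g \<mu> n r) x = (\<Sum>k. ?t (Suc r) k x - ?t (Suc r) k 0)"
    using prim_neumann_sum_eq_suminf[OF x] by simp
  also have "\<dots> = neumann_sum g \<mu> n (Suc r) x - neumann_sum g \<mu> n (Suc r) 0"
    unfolding neumann_sum_def using sum x by (intro suminf_diff[symmetric]) auto
  finally show ?thesis .
qed

lemma neumann_sum_periodic: "neumann_sum g \<mu> n (Suc r) 1 = neumann_sum g \<mu> n (Suc r) 0"
proof -
  have "prim ((mean_zero_prim ^^ i) g) 1 = 0" for i
    using mean_zero_prim_mean_zero[OF integrable01_mean_zero_prim_iter[OF g(1)]] g(2)
    by (cases i) simp_all
  then have "(mean_zero_prim ^^ Suc i) g 1 = (mean_zero_prim ^^ Suc i) g 0" for i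
    using mean_zero_prim_periodic[OF integrable01_mean_zero_prim_iter[OF g(1)]] by simp
  from this[of "n*_ + r"] show ?thesis unfolding neumann_sum_def by simp
qed

lemma neumann_sum_0:
  assumes y: "y \<in> {0..1}"
  shows "neumann_sum g \<mu> n 0 y = g y + \<mu> * neumann_sum g \<mu> n n y"
proof -
  let ?a = "\<lambda>k. \<mu>^k * (mean_zero_prim ^^ (n*k)) g y"
  let ?b = "\<lambda>k. \<mu>^k * (mean_zero_prim ^^ (n*k + n)) g y"
  have sa: "summable ?a"
    using summable_neumann_terms_abs[OF y, of 0] by (simp add: summable_rabs_cancel)
  have sb: "summable ?b"
    using summable_neumann_terms_abs[OF y, of n] by (rule summable_rabs_cancel)
  have "suminf ?a - ?a 0 = (\<Sum>k. ?a (Suc k))" by (rule suminf_split_head[OF sa, symmetric])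
  also have "\<dots> = (\<Sum>k. \<mu> * ?b k)" by (simp add: algebra_simps)
  also have "\<dots> = \<mu> * suminf ?b" by (rule suminf_mult[OF sb])
  finally show ?thesis unfolding neumann_sum_def by simp
qed

lemma continuous_on_neumann_sum: "continuous_on {0..1} (neumann_sum g \<mu> n (Suc r))"
  by (rule continuous_on_if_prim[OF integrable01_neumann_sum prim_neumann_sum])

(* With S r = neumann_sum g mu n r, the derivatives of w = c - S n are - S (n - j), and
   S 0 = g + mu * S n turns mu w - w^(n) into g + mu c. *)
lemma res_eq_neumann_sum:
  fixes c :: real
  assumes l: "n = 2*l+1" and gL2: "L2 g"
  defines "w \<equiv> \<lambda>y. c - neumann_sum g \<mu> n n y"
  shows "res_eq l \<mu> w (\<lambda>j. if j = 0 then w else (\<lambda>y. - neumann_sum g \<mu> n (n - j) y)) (\<lambda>y. g y + \<mu> * c)"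
    (is "res_eq l \<mu> w ?d _")
proof -
  define S where "S = neumann_sum g \<mu> n"
  have d_diff: "?d k y - ?d k 0 = S (n - k) 0 - S (n - k) y" for k y
    by (simp add: w_def S_def)
  have top: "?d n y = \<mu> * (- S n y) - g y" if "y \<in> {0..1}" for y
    using neumann_sum_0[OF that] n by (simp add: S_def)
  show ?thesis
    unfolding l[symmetric]
  proof (rule res_eqI[of ?d w l, unfolded l[symmetric]])
    show "?d 0 = w" by simp
    show "integrable01 (?d (Suc k))" for k
      by (simp add: integrable01_neumann_sum)
    show "prim (?d (Suc k)) y = ?d k y - ?d k 0" if "k < n" "y \<in> {0..1}" for k y
    proof -
      have "n - k = Suc (n - Suc k)" using that by simp
      then show ?thesis
        using prim_neumann_sum[OF that(2), of "n - Suc k"] unfolding d_diff by (simp add: S_def)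
    qed
    show "?d k 0 = ?d k 1" if "k \<le> 2*l" for k
    proof -
      have "n - k = Suc (n - Suc k)" using that by (simp add: l)
      then show ?thesis using neumann_sum_periodic[of "n - Suc k"] d_diff[of k 1] by (simp add: S_def)
    qed
    have "continuous_on {0..1} (S n)"
      using continuous_on_neumann_sum[of "n - 1"] n by (simp add: S_def)
    then have "L2 (\<lambda>y. \<mu> * (- S n y) - g y)"
      by (intro L2_diff_continuous_left gL2 continuous_intros)
    then show "L2 (?d n)" by (rule L2_cong) (simp add: top)
    show "\<mu> * w x - ?d n x = g x + \<mu> * c" if "x \<in> {0..1}" for x
      by (simp add: top[OF that] w_def S_def algebra_simps)
  qed
qed

end

lemma res_eq_exists_small:
  assumes f: "L2 f" and \<mu>: "\<mu> \<noteq> 0" and small: "2^(2*l+1) * \<bar>\<mu>\<bar> \<le> 1/2"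
  shows "\<exists>w d. res_eq l \<mu> w d f"
proof -
  define m where "m = prim f 1"
  define g where "g = (\<lambda>y. f y - m)"
  have g: "L2 g" "prim g 1 = 0"
    using L2_diff_continuous_right[OF f, of "\<lambda>_. m"] L2_imp_integrable01[OF f]
    by (simp_all add: g_def m_def Bochner_Integration.integral_diff)
  obtain w d where "res_eq l \<mu> w d (\<lambda>y. g y + \<mu> * (m / \<mu>))"
    using res_eq_neumann_sum[OF L2_imp_integrable01[OF g(1)] g(2) _ small refl g(1), where c = "m / \<mu>"]
    by auto
  moreover have "(\<lambda>y. g y + \<mu> * (m / \<mu>)) = f" using \<mu> by (simp add: g_def)
  ultimately show ?thesis by auto
qed

lemma resolvent_set_small:
  assumes \<mu>: "\<mu> \<noteq> 0" and small: "2^(2*l+1) * \<bar>\<mu>\<bar> \<le> 1/2"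
  shows "\<mu> \<in> resolvent_set l"
proof (rule resolvent_setI[OF res_eq_exists_small[OF _ \<mu> small]])
  show "0 \<le> 1 / \<bar>\<mu>\<bar> + 2^(2*l+3)" by simp
  fix f w d and x :: real
  assume f: "L2 f" and sol: "res_eq l \<mu> w d f" and x: "x \<in> {0..1}"
  have "\<bar>prim f 1 / \<mu>\<bar> \<le> 1 / \<bar>\<mu>\<bar> * L1norm f"
    using integral_abs_bound[of "lebesgue_on {0..1}" f] by (simp add: divide_right_mono)
  moreover have "\<bar>w x\<bar> \<le> \<bar>w x - prim f 1 / \<mu>\<bar> + \<bar>prim f 1 / \<mu>\<bar>" by linarith
  ultimately show "\<bar>w x\<bar> \<le> (1 / \<bar>\<mu>\<bar> + 2^(2*l+3)) * L1norm f"
    using res_eq_apriori_small[OF sol f \<mu> small x] unfolding distrib_right by linarith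
qed

section \<open>Positivity for small \<open>\<mu>\<close>\<close>

lemma res_eq_small_integral_le_sgn_mult:
  assumes sol: "res_eq l \<mu> w d f" and f: "L2 f" and pos: "AE x in lebesgue_on {0..1}. 0 \<le> f x"
    and \<mu>: "\<mu> \<noteq> 0" and small: "2^(2*l+4) * \<bar>\<mu>\<bar> \<le> 1" and x: "x \<in> {0..1}"
  shows "prim f 1 \<le> sgn \<mu> * w x"
proof -
  define K where "K = (2::real)^(2*l+3)"
  have m: "0 \<le> prim f 1" by (rule integral_nonneg_AE[OF pos])
  have "2^(2*l+1) * \<bar>\<mu>\<bar> \<le> 1/2" using small by (simp add: power_add)
  then have close: "\<bar>w x - prim f 1 / \<mu>\<bar> \<le> K * prim f 1"
    using res_eq_apriori_small[OF sol f \<mu> _ x] L1norm_eq_integral_if_nonneg[OF L2_imp_integrable01[OF f] pos]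
    by (simp add: K_def)
  have "2 * K * prim f 1 * \<bar>\<mu>\<bar> \<le> prim f 1"
    using mult_left_mono[OF small m] by (simp add: K_def power_add mult_ac)
  then have big: "2 * K * prim f 1 \<le> prim f 1 / \<bar>\<mu>\<bar>" using \<mu> by (simp add: pos_le_divide_eq)
  have "prim f 1 \<le> K * prim f 1" using m by (simp add: K_def mult_le_cancel_right1)
  then show ?thesis
    using close big \<mu> by (cases "\<mu> > 0") (auto simp: abs_le_iff)
qed

lemma small_positive_resolvent:
  "\<exists>\<epsilon>>0. \<forall>\<mu>\<in>{0<..<\<epsilon>}. \<mu> \<in> resolvent_set l \<and> op_ge (Res l \<mu>) one_tensor_one"
proof (intro exI[of _ "1 / 2^(2*l+4)"] conjI ballI)
  fix \<mu> :: real assume "\<mu> \<in> {0<..<1 / 2^(2*l+4)}"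
  then have \<mu>: "0 < \<mu>" and small: "2^(2*l+4) * \<bar>\<mu>\<bar> \<le> 1" by (simp_all add: field_simps)
  then have small': "2^(2*l+1) * \<bar>\<mu>\<bar> \<le> 1/2" by (simp add: power_add)
  show "\<mu> \<in> resolvent_set l" using resolvent_set_small[OF _ small'] \<mu> by simp
  show "op_ge (Res l \<mu>) one_tensor_one"
  proof (rule op_ge_Res_one_tensor_oneI[of _ _ 1])
    show "\<exists>w d. res_eq l \<mu> w d f" if "L2 f" for f
      using res_eq_exists_small[OF that _ small'] \<mu> by simp
    fix f w d and x :: real
    assume "L2 f" "AE x in lebesgue_on {0..1}. 0 \<le> f x" "res_eq l \<mu> w d f" "x \<in> {0..1}"
    from res_eq_small_integral_le_sgn_mult[OF this(3,1,2) _ small this(4)] \<mu>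
    show "1 * prim f 1 \<le> w x" by simp
  qed simp
qed simp

lemma small_negative_resolvent:
  "\<exists>\<epsilon>>0. \<forall>\<mu>\<in>{-\<epsilon><..<0}. \<mu> \<in> resolvent_set l \<and> op_ge (\<lambda>f x. - one_tensor_one f x) (Res l \<mu>)"
proof (intro exI[of _ "1 / 2^(2*l+4)"] conjI ballI)
  fix \<mu> :: real assume "\<mu> \<in> {- (1 / 2^(2*l+4))<..<0}"
  then have \<mu>: "\<mu> < 0" and small: "2^(2*l+4) * \<bar>\<mu>\<bar> \<le> 1" by (simp_all add: field_simps)
  then have small': "2^(2*l+1) * \<bar>\<mu>\<bar> \<le> 1/2" by (simp add: power_add)
  show "\<mu> \<in> resolvent_set l" using resolvent_set_small[OF _ small'] \<mu> by simp
  show "op_ge (\<lambda>f x. - one_tensor_one f x) (Res l \<mu>)"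
  proof (rule op_ge_neg_one_tensor_one_ResI[of _ _ 1])
    show "\<exists>w d. res_eq l \<mu> w d f" if "L2 f" for f
      using res_eq_exists_small[OF that _ small'] \<mu> by simp
    fix f w d and x :: real
    assume "L2 f" "AE x in lebesgue_on {0..1}. 0 \<le> f x" "res_eq l \<mu> w d f" "x \<in> {0..1}"
    from res_eq_small_integral_le_sgn_mult[OF this(3,1,2) _ small this(4)] \<mu>
    show "1 * w x \<le> - prim f 1" by simp
  qed simp
qed simp

section \<open>The first-order case \<open>l = 0\<close>\<close>

lemma integral_eq_diff_if_derivative:
  fixes G g :: "real \<Rightarrow> real"
  assumes "a \<le> b" and "\<And>x. x \<in> {a..b} \<Longrightarrow> (G has_real_derivative g x) (at x within {a..b})"
  shows "integral {a..b} g = G b - G a"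
proof (rule integral_unique, rule fundamental_theorem_of_calculus[OF assms(1)])
  show "(G has_vector_derivative g x) (at x within {a..b})" if "x \<in> {a..b}" for x
    using assms(2)[OF that] by (simp add: has_real_derivative_iff_has_vector_derivative)
qed

lemma has_real_derivative_integral:
  fixes \<phi> :: "real \<Rightarrow> real"
  assumes "continuous_on {0..1} \<phi>" "x \<in> {0..1}"
  shows "((\<lambda>u. integral {0..u} \<phi>) has_real_derivative \<phi> x) (at x within {0..1})"
  using integral_has_vector_derivative[OF assms] by (simp add: has_real_derivative_iff_has_vector_derivative)

lemma abs_integral_le:
  fixes g :: "real \<Rightarrow> real"
  assumes g: "continuous_on {0..1} g" and B: "\<And>r. r \<in> {0..1} \<Longrightarrow> \<bar>g r\<bar> \<le> B"
    and ab: "0 \<le> a" "a \<le> b" "b \<le> 1"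
  shows "\<bar>integral {a..b} g\<bar> \<le> B"
proof -
  have B0: "0 \<le> B" using B[of 0] by simp
  have "g integrable_on {a..b}"
    by (rule integrable_continuous_interval) (rule continuous_on_subset[OF g], use ab in auto)
  then have "norm (integral {a..b} g) \<le> B * measure lborel {a..b}"
    by (intro has_integral_bound_real[OF B0 finite.emptyI integrable_integral]) (use B ab in auto)
  also have "\<dots> \<le> B * 1" using ab B0 by (intro mult_left_mono) simp_all
  finally show ?thesis by simp
qed

lemma integral_exp_neg:
  fixes \<mu> :: real
  assumes "\<mu> \<noteq> 0" "a \<le> b"
  shows "integral {a..b} (\<lambda>r. exp (-\<mu> * r)) = (exp (-\<mu> * a) - exp (-\<mu> * b)) / \<mu>"
proof -
  have "((\<lambda>r. - exp (-\<mu> * r) / \<mu>) has_real_derivative exp (-\<mu> * x)) (at x within {a..b})" for x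
    using assms(1) by (auto intro!: derivative_eq_intros)
  from integral_eq_diff_if_derivative[OF assms(2) this] show ?thesis
    by (simp add: diff_divide_distrib)
qed

lemma exp_le_exp_abs: "r \<in> {0..1} \<Longrightarrow> exp (c * r) \<le> exp \<bar>c::real\<bar>"
proof -
  assume r: "r \<in> {0..1}"
  have "c * r \<le> \<bar>c\<bar> * r" using r by (intro mult_right_mono) auto
  also have "\<dots> \<le> \<bar>c\<bar>" using r by (simp add: mult_left_le)
  finally show ?thesis by simp
qed

lemma exp_weighted_antimono:
  fixes \<phi> :: "real \<Rightarrow> real"
  assumes \<phi>: "continuous_on {0..1} \<phi>"
    and anti: "\<And>r r'. 0 \<le> r' \<Longrightarrow> r' \<le> r \<Longrightarrow> r \<le> 1 \<Longrightarrow> \<phi> r \<le> \<phi> r'"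
    and st: "0 \<le> s" "s \<le> t" "t \<le> 1"
  shows "exp (-\<mu> * t) * \<phi> t + \<mu> * integral {s..t} (\<lambda>r. exp (-\<mu> * r) * \<phi> r) \<le> exp (-\<mu> * s) * \<phi> s"
proof -
  let ?g = "\<lambda>r. exp (-\<mu> * r) * \<phi> r"
  have g: "?g integrable_on {s..t}"
    by (intro integrable_continuous_interval continuous_intros continuous_on_subset[OF \<phi>]) (use st in auto)
  have e: "(\<lambda>r. c * exp (-\<mu> * r)) integrable_on {s..t}" for c
    by (intro integrable_continuous_interval continuous_intros)
  have \<phi>st: "\<phi> t \<le> \<phi> s" using anti st by simp
  consider "\<mu> = 0" | "\<mu> > 0" | "\<mu> < 0" by linarith
  then show ?thesis
  proof cases
    case 1
    then show ?thesis using \<phi>st by simp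
  next
    case 2
    have "integral {s..t} ?g \<le> integral {s..t} (\<lambda>r. \<phi> s * exp (-\<mu> * r))"
      using anti st by (intro integral_le[OF g e]) (auto simp: mult.commute)
    then have "\<mu> * integral {s..t} ?g \<le> \<phi> s * (exp (-\<mu> * s) - exp (-\<mu> * t))"
      using 2 integral_exp_neg[of \<mu> s t] st by (simp add: pos_le_divide_eq mult.commute)
    with \<phi>st have "exp (-\<mu> * t) * \<phi> t + \<mu> * integral {s..t} ?g
        \<le> exp (-\<mu> * t) * \<phi> s + \<phi> s * (exp (-\<mu> * s) - exp (-\<mu> * t))"
      by (intro add_mono mult_left_mono) simp_all
    then show ?thesis by (simp add: algebra_simps)
  next
    case 3
    have "integral {s..t} (\<lambda>r. \<phi> t * exp (-\<mu> * r)) \<le> integral {s..t} ?g"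
      using anti st by (intro integral_le[OF e g]) (auto simp: mult.commute)
    then have "\<mu> * integral {s..t} ?g \<le> \<phi> t * (exp (-\<mu> * s) - exp (-\<mu> * t))"
      using 3 integral_exp_neg[of \<mu> s t] st by (simp add: neg_divide_le_eq mult.commute)
    then have "exp (-\<mu> * t) * \<phi> t + \<mu> * integral {s..t} ?g
        \<le> exp (-\<mu> * t) * \<phi> t + \<phi> t * (exp (-\<mu> * s) - exp (-\<mu> * t))"
      by simp
    also have "\<dots> = exp (-\<mu> * s) * \<phi> t" by (simp add: algebra_simps)
    also have "\<dots> \<le> exp (-\<mu> * s) * \<phi> s" using \<phi>st by simp
    finally show ?thesis .
  qed
qed

lemma exp_mult_le_exp_mult:
  fixes \<mu> a c :: real
  assumes sign: "0 \<le> (exp \<mu> - 1) * a" and c: "0 \<le> c" "c \<le> 1"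
  shows "exp (\<mu> * c) * a \<le> exp \<mu> * a"
proof -
  consider "\<mu> = 0" | "\<mu> > 0" | "\<mu> < 0" by linarith
  then show ?thesis
  proof cases
    case 1
    then show ?thesis by simp
  next
    case 2
    then have "0 \<le> a" using sign by (simp add: zero_le_mult_iff)
    moreover have "\<mu> * c \<le> \<mu>" using 2 c by (simp add: mult_left_le)
    ultimately show ?thesis by (intro mult_right_mono) simp_all
  next
    case 3
    then have "a \<le> 0" using sign by (simp add: zero_le_mult_iff)
    moreover have "\<mu> \<le> \<mu> * c" using 3 c by (simp add: mult_le_cancel_left1)
    ultimately show ?thesis by (intro mult_right_mono_neg) simp_all
  qed
qed

(* Going once around the circle gives w x <= exp mu * w x, which fixes the sign of w. *)
lemma periodic_growth_le_exp:
  fixes w :: "real \<Rightarrow> real"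
  assumes per: "w 1 = w 0"
    and growth: "\<And>s t. 0 \<le> s \<Longrightarrow> s \<le> t \<Longrightarrow> t \<le> 1 \<Longrightarrow> w t \<le> exp (\<mu> * (t - s)) * w s"
    and x: "x \<in> {0..1}" and y: "y \<in> {0..1}"
  shows "w y \<le> exp \<mu> * w x"
proof -
  have wrap: "w b \<le> exp (\<mu> * (b + 1 - a)) * w a" if "a \<in> {0..1}" "b \<in> {0..1}" for a b
  proof -
    have "w b \<le> exp (\<mu> * b) * w 1" using growth[of 0 b] that per by simp
    also have "\<dots> \<le> exp (\<mu> * b) * (exp (\<mu> * (1 - a)) * w a)"
      using growth[of a 1] that by (intro mult_left_mono) auto
    also have "\<dots> = exp (\<mu> * b + \<mu> * (1 - a)) * w a"
      by (simp add: exp_add)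
    also have "\<mu> * b + \<mu> * (1 - a) = \<mu> * (b + 1 - a)"
      by (simp add: algebra_simps)
    finally show ?thesis .
  qed
  obtain c where c: "0 \<le> c" "c \<le> 1" and wc: "w y \<le> exp (\<mu> * c) * w x"
  proof (cases "x \<le> y")
    case True
    then show ?thesis using that[of "y - x"] growth[of x y] x y by auto
  next
    case False
    then show ?thesis using that[of "y + 1 - x"] wrap[OF x y] x y by auto
  qed
  have "0 \<le> (exp \<mu> - 1) * w x" using wrap[OF x x] by (simp add: algebra_simps)
  then have "exp (\<mu> * c) * w x \<le> exp \<mu> * w x" by (rule exp_mult_le_exp_mult[OF _ c])
  with wc show ?thesis by linarith
qed

(* For l = 0 the equation w' = mu w - f is used in the integrated form below, F being the
   primitive of f: it involves only integrals of continuous functions, to which the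
   fundamental theorem of calculus applies. *)
context
  fixes \<mu> :: real and F w :: "real \<Rightarrow> real"
  assumes F: "continuous_on {0..1} F" and w: "continuous_on {0..1} w"
    and eq: "\<And>y. y \<in> {0..1} \<Longrightarrow> w y = w 0 - F y + \<mu> * integral {0..y} w"
begin

lemma integral_equation_exp_integral:
  assumes y: "y \<in> {0..1}"
  shows "exp (-\<mu> * y) * integral {0..y} w = integral {0..y} (\<lambda>r. exp (-\<mu> * r) * (w 0 - F r))"
proof -
  have "((\<lambda>r. exp (-\<mu> * r) * integral {0..r} w) has_real_derivative exp (-\<mu> * x) * (w 0 - F x))
      (at x within {0..y})" if x: "x \<in> {0..y}" for x
  proof -
    have x1: "x \<in> {0..1}" using x y by auto
    have W: "((\<lambda>u. integral {0..u} w) has_real_derivative w x) (at x within {0..y})"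
      by (rule DERIV_subset[OF has_real_derivative_integral[OF w x1]]) (use y in auto)
    have E: "((\<lambda>r. exp (-\<mu> * r)) has_real_derivative exp (-\<mu> * x) * (-\<mu>)) (at x within {0..y})"
      by (auto intro!: derivative_eq_intros)
    show ?thesis
      by (rule DERIV_cong[OF DERIV_mult[OF E W]]) (subst eq[OF x1], simp add: algebra_simps)
  qed
  from integral_eq_diff_if_derivative[OF _ this] y show ?thesis by simp
qed

lemma integral_equation_exp_weighted:
  assumes y: "y \<in> {0..1}"
  shows "exp (-\<mu> * y) * w y
    = exp (-\<mu> * y) * (w 0 - F y) + \<mu> * integral {0..y} (\<lambda>r. exp (-\<mu> * r) * (w 0 - F r))"
  unfolding integral_equation_exp_integral[OF y, symmetric] by (subst eq[OF y]) (simp add: algebra_simps)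

lemma integral_equation_endpoint:
  assumes \<mu>: "\<mu> \<noteq> 0"
  shows "w 1 = exp \<mu> * w 0 - F 1 - \<mu> * exp \<mu> * integral {0..1} (\<lambda>r. exp (-\<mu> * r) * F r)"
proof -
  define K where "K = integral {0..1} (\<lambda>r. exp (-\<mu> * r) * F r)"
  define W where "W = integral {0..1} w"
  have "exp (-\<mu>) * W = integral {0..1} (\<lambda>r. w 0 * exp (-\<mu> * r) - exp (-\<mu> * r) * F r)"
    using integral_equation_exp_integral[of 1] unfolding W_def by (simp add: algebra_simps)
  also have "\<dots> = w 0 * ((1 - exp (-\<mu>)) / \<mu>) - K"
    unfolding K_def using integral_exp_neg[OF \<mu>, of 0 1]
    by (subst integral_diff) (auto intro!: integrable_continuous_interval continuous_intros F)
  finally have "\<mu> * W = w 0 * (exp \<mu> - 1) - \<mu> * exp \<mu> * K"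
    using \<mu> by (simp add: exp_minus field_simps)
  moreover have "w 1 = w 0 - F 1 + \<mu> * W" unfolding W_def by (rule eq) simp
  ultimately show ?thesis unfolding K_def by (simp add: algebra_simps)
qed

lemma integral_equation_abs_le:
  assumes N: "\<And>r. r \<in> {0..1} \<Longrightarrow> \<bar>F r\<bar> \<le> N" and y: "y \<in> {0..1}"
  shows "\<bar>w y\<bar> \<le> (\<bar>w 0\<bar> + N) * (1 + \<bar>\<mu>\<bar> * exp \<bar>\<mu>\<bar> * exp \<bar>\<mu>\<bar>)"
proof -
  define E where "E = exp \<bar>\<mu>\<bar>"
  have "\<bar>integral {0..y} (\<lambda>r. exp (-\<mu> * r) * (w 0 - F r))\<bar> \<le> E * (\<bar>w 0\<bar> + N)"
  proof (rule abs_integral_le)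
    show "continuous_on {0..1} (\<lambda>r. exp (-\<mu> * r) * (w 0 - F r))" by (intro continuous_intros F)
    show "\<bar>exp (-\<mu> * r) * (w 0 - F r)\<bar> \<le> E * (\<bar>w 0\<bar> + N)" if "r \<in> {0..1}" for r
    proof -
      have "\<bar>w 0 - F r\<bar> \<le> \<bar>w 0\<bar> + N" using N[OF that] by linarith
      moreover have "exp (-\<mu> * r) \<le> E" unfolding E_def using exp_le_exp_abs[OF that, of "-\<mu>"] by simp
      ultimately show ?thesis unfolding abs_mult by (intro mult_mono) (auto simp: E_def)
    qed
  qed (use y in auto)
  moreover have "integral {0..y} w = exp (\<mu> * y) * integral {0..y} (\<lambda>r. exp (-\<mu> * r) * (w 0 - F r))"
    using integral_equation_exp_integral[OF y] by (simp add: exp_minus field_simps)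
  moreover have "exp (\<mu> * y) \<le> E" unfolding E_def by (rule exp_le_exp_abs[OF y])
  ultimately have "\<bar>integral {0..y} w\<bar> \<le> E * (E * (\<bar>w 0\<bar> + N))"
    by (simp only: abs_mult abs_exp_cancel) (rule mult_mono, auto simp: E_def)
  then have "\<bar>\<mu>\<bar> * \<bar>integral {0..y} w\<bar> \<le> \<bar>\<mu>\<bar> * (E * (E * (\<bar>w 0\<bar> + N)))"
    by (rule mult_left_mono) simp
  moreover have "\<bar>w y\<bar> \<le> \<bar>w 0\<bar> + \<bar>F y\<bar> + \<bar>\<mu> * integral {0..y} w\<bar>"
    using eq[OF y] by linarith
  ultimately have "\<bar>w y\<bar> \<le> \<bar>w 0\<bar> + N + \<bar>\<mu>\<bar> * (E * (E * (\<bar>w 0\<bar> + N)))"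
    using N[OF y] unfolding abs_mult by linarith
  then show ?thesis unfolding E_def by (simp add: algebra_simps)
qed

lemma integral_equation_periodic_abs_0_le:
  assumes \<mu>: "\<mu> \<noteq> 0" and per: "w 1 = w 0" and N: "\<And>r. r \<in> {0..1} \<Longrightarrow> \<bar>F r\<bar> \<le> N"
  shows "\<bar>w 0\<bar> * \<bar>exp \<mu> - 1\<bar> \<le> N * (1 + \<bar>\<mu>\<bar> * exp \<bar>\<mu>\<bar> * exp \<bar>\<mu>\<bar>)"
proof -
  define E where "E = exp \<bar>\<mu>\<bar>"
  define K where "K = integral {0..1} (\<lambda>r. exp (-\<mu> * r) * F r)"
  have "\<bar>K\<bar> \<le> E * N"
    unfolding K_def
  proof (rule abs_integral_le)
    show "continuous_on {0..1} (\<lambda>r. exp (-\<mu> * r) * F r)" by (intro continuous_intros F)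
    show "\<bar>exp (-\<mu> * r) * F r\<bar> \<le> E * N" if "r \<in> {0..1}" for r
      unfolding E_def abs_mult using exp_le_exp_abs[OF that, of "-\<mu>"] N[OF that]
      by (intro mult_mono) auto
  qed auto
  then have "\<bar>\<mu> * exp \<mu> * K\<bar> \<le> \<bar>\<mu>\<bar> * E * (E * N)"
    unfolding abs_mult E_def by (intro mult_mono) auto
  moreover have "w 0 * (exp \<mu> - 1) = F 1 + \<mu> * exp \<mu> * K"
    using integral_equation_endpoint[OF \<mu>] per unfolding K_def by (simp add: algebra_simps)
  then have "\<bar>w 0\<bar> * \<bar>exp \<mu> - 1\<bar> \<le> \<bar>F 1\<bar> + \<bar>\<mu> * exp \<mu> * K\<bar>"
    by (metis abs_mult abs_triangle_ineq)
  ultimately have "\<bar>w 0\<bar> * \<bar>exp \<mu> - 1\<bar> \<le> N + \<bar>\<mu>\<bar> * E * (E * N)"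
    using N[of 1] by simp
  then show ?thesis unfolding E_def by (simp add: algebra_simps)
qed

lemma integral_equation_growth:
  assumes mono: "\<And>r r'. 0 \<le> r' \<Longrightarrow> r' \<le> r \<Longrightarrow> r \<le> 1 \<Longrightarrow> F r' \<le> F r"
    and st: "0 \<le> s" "s \<le> t" "t \<le> 1"
  shows "w t \<le> exp (\<mu> * (t - s)) * w s"
proof -
  let ?g = "\<lambda>r. exp (-\<mu> * r) * (w 0 - F r)"
  have "?g integrable_on {0..t}"
    by (intro integrable_continuous_interval continuous_intros continuous_on_subset[OF F]) (use st in auto)
  then have "integral {0..t} ?g = integral {0..s} ?g + integral {s..t} ?g"
    using st by (intro Henstock_Kurzweil_Integration.integral_combine[symmetric]) auto
  moreover have "exp (-\<mu> * t) * (w 0 - F t) + \<mu> * integral {s..t} ?g \<le> exp (-\<mu> * s) * (w 0 - F s)"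
    using mono st by (intro exp_weighted_antimono continuous_intros F) auto
  ultimately have weighted: "exp (-\<mu> * t) * w t \<le> exp (-\<mu> * s) * w s"
    using integral_equation_exp_weighted[of s] integral_equation_exp_weighted[of t] st
    by (simp add: algebra_simps)
  have "w t = exp (\<mu> * t) * (exp (-\<mu> * t) * w t)"
    by (simp add: exp_minus)
  also have "\<dots> \<le> exp (\<mu> * t) * (exp (-\<mu> * s) * w s)"
    by (rule mult_left_mono[OF weighted]) simp
  also have "\<dots> = exp (\<mu> * (t - s)) * w s"
    by (simp add: mult.assoc[symmetric] exp_add[symmetric] right_diff_distrib)
  finally show ?thesis .
qed

end

(* Variation of constants: W' = mu W + (a - F) = w, so W is the primitive of w. *)
lemma integral_equation_solvable:
  fixes F :: "real \<Rightarrow> real"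
  assumes F: "continuous_on {0..1} F" and F0: "F 0 = 0"
  shows "\<exists>w. continuous_on {0..1} w \<and> w 0 = a \<and> (\<forall>y\<in>{0..1}. w y = w 0 - F y + \<mu> * integral {0..y} w)"
proof -
  define g where "g r = exp (-\<mu> * r) * (a - F r)" for r
  define W where "W y = exp (\<mu> * y) * integral {0..y} g" for y
  define w where "w y = a - F y + \<mu> * W y" for y
  have g: "continuous_on {0..1} g" unfolding g_def by (intro continuous_intros F)
  have "continuous_on {0..1} (\<lambda>y. integral {0..y} g)"
    by (rule indefinite_integral_continuous_1[OF integrable_continuous_interval[OF g]])
  then have w: "continuous_on {0..1} w" unfolding w_def W_def by (intro continuous_intros F)
  have W': "(W has_real_derivative w x) (at x within {0..1})" if x: "x \<in> {0..1}" for x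
  proof -
    have E: "((\<lambda>r. exp (\<mu> * r)) has_real_derivative exp (\<mu> * x) * \<mu>) (at x within {0..1})"
      by (auto intro!: derivative_eq_intros)
    have "exp (\<mu> * x) * g x = a - F x" unfolding g_def by (simp add: mult.assoc[symmetric] exp_add[symmetric])
    then show ?thesis unfolding W_def
      by (intro DERIV_cong[OF DERIV_mult[OF E has_real_derivative_integral[OF g x]]])
        (simp add: w_def W_def algebra_simps)
  qed
  have W0: "W 0 = 0" unfolding W_def by simp
  have "integral {0..y} w = W y" if y: "y \<in> {0..1}" for y
  proof -
    have "integral {0..y} w = W y - W 0"
      using y by (intro integral_eq_diff_if_derivative DERIV_subset[OF W']) auto
    then show ?thesis using W0 by simp
  qed
  then have "\<forall>y\<in>{0..1}. w y = w 0 - F y + \<mu> * integral {0..y} w"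
    using W0 F0 by (simp add: w_def)
  moreover have "w 0 = a" using W0 F0 by (simp add: w_def)
  ultimately show ?thesis using w by blast
qed

lemma res_eq0_integral_equation:
  assumes sol: "res_eq 0 \<mu> w d f" and f: "L2 f" and y: "y \<in> {0..1}"
  shows "w y = w 0 - prim f y + \<mu> * integral {0..y} w"
proof -
  note dom = res_eq_domA[OF sol]
  have Iw: "integrable (lebesgue_on {0..y}) w"
    using y by (intro integrable01_subinterval[OF continuous_imp_integrable_real[OF domA_continuous[OF dom]]]) auto
  have If: "integrable (lebesgue_on {0..y}) f"
    using y by (intro integrable01_subinterval[OF L2_imp_integrable01[OF f]]) auto
  have "integrable01 (d 1)" using domA_integrable[OF dom, of 0] by simp
  then have Id: "integrable (lebesgue_on {0..y}) (d 1)"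
    by (rule integrable01_subinterval) (use y in auto)
  have "AE r in lebesgue_on {0..1}. d 1 r = \<mu> * w r - f r"
    using res_eq_top_derivative[OF sol] by simp
  then have AE: "AE r in lebesgue_on {0..y}. d 1 r = \<mu> * w r - f r"
    by (rule AE_lebesgue_on_subinterval) (use y in auto)
  have "w y - w 0 = prim (d 1) y"
    using domA_prim[OF dom, of 0 y] domA_base[OF dom] y by simp
  also have "\<dots> = prim (\<lambda>r. \<mu> * w r - f r) y"
    using Id Iw If AE by (intro integral_cong_AE) (auto intro: borel_measurable_integrable)
  also have "\<dots> = \<mu> * integral {0..y} w - prim f y"
    using Iw If by (simp add: Bochner_Integration.integral_diff lebesgue_integral_eq_integral)
  finally show ?thesis by simp
qed

lemma res_eq0_if_integral_equation:
  assumes f: "L2 f" and w: "continuous_on {0..1} w"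
    and eq: "\<And>y. y \<in> {0..1} \<Longrightarrow> w y = w 0 - prim f y + \<mu> * integral {0..y} w"
    and per: "w 1 = w 0"
  shows "res_eq 0 \<mu> w (\<lambda>j. if j = 0 then w else (\<lambda>x. \<mu> * w x - f x)) f"
proof -
  have Iw: "integrable01 w" by (rule continuous_imp_integrable_real[OF w])
  have If: "integrable01 f" by (rule L2_imp_integrable01[OF f])
  have "prim (\<lambda>x. \<mu> * w x - f x) y = w y - w 0" if "y \<in> {0..1}" for y
  proof -
    have "prim (\<lambda>x. \<mu> * w x - f x) y = \<mu> * prim w y - prim f y"
      using that integrable01_subinterval[OF Iw] integrable01_subinterval[OF If]
      by (simp add: Bochner_Integration.integral_diff)
    then show ?thesis using eq[OF that] prim_eq_integral[OF Iw that] by simp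
  qed
  moreover have "L2 (\<lambda>x. \<mu> * w x - f x)" by (intro L2_diff_continuous_left f continuous_intros w)
  ultimately show ?thesis
    using per Iw If by (intro res_eqI) auto
qed

lemma res_eq0_exists:
  assumes \<mu>: "\<mu> \<noteq> 0" and f: "L2 f"
  shows "\<exists>w d. res_eq 0 \<mu> w d f"
proof -
  define K where "K = integral {0..1} (\<lambda>r. exp (-\<mu> * r) * prim f r)"
  define a where "a = (prim f 1 + \<mu> * exp \<mu> * K) / (exp \<mu> - 1)"
  have F: "continuous_on {0..1} (prim f)" by (rule continuous_on_prim[OF L2_imp_integrable01[OF f]])
  obtain w where w: "continuous_on {0..1} w" and w0: "w 0 = a"
    and eq: "\<And>y. y \<in> {0..1} \<Longrightarrow> w y = w 0 - prim f y + \<mu> * integral {0..y} w"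
    using integral_equation_solvable[OF F prim_0, of a \<mu>] by blast
  have "a * (exp \<mu> - 1) = prim f 1 + \<mu> * exp \<mu> * K" unfolding a_def using \<mu> by simp
  then have "w 1 = w 0"
    using integral_equation_endpoint[OF F w eq \<mu>] w0 unfolding K_def by (simp add: algebra_simps)
  then show ?thesis using res_eq0_if_integral_equation[OF f w eq] by blast
qed

lemma resolvent_set_0:
  assumes \<mu>: "\<mu> \<noteq> 0"
  shows "\<mu> \<in> resolvent_set 0"
proof -
  define M where "M = 1 + \<bar>\<mu>\<bar> * exp \<bar>\<mu>\<bar> * exp \<bar>\<mu>\<bar>"
  define Z where "Z = \<bar>exp \<mu> - 1\<bar>"
  have M: "0 \<le> M" and Z: "0 < Z" using \<mu> by (simp_all add: M_def Z_def)
  show ?thesis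
  proof (rule resolvent_setI[OF res_eq0_exists[OF \<mu>]])
    show "0 \<le> (1 + M / Z) * M" using M Z by simp
    fix f w d and x :: real
    assume f: "L2 f" and sol: "res_eq 0 \<mu> w d f" and x: "x \<in> {0..1}"
    note dom = res_eq_domA[OF sol]
    have F: "continuous_on {0..1} (prim f)" by (rule continuous_on_prim[OF L2_imp_integrable01[OF f]])
    note w = domA_continuous[OF dom]
    note eq = res_eq0_integral_equation[OF sol f]
    have N: "\<bar>prim f r\<bar> \<le> L1norm f" if "r \<in> {0..1}" for r
      by (rule abs_prim_le_L1norm[OF L2_imp_integrable01[OF f] that])
    have "w 1 = w 0" using domA_periodic[OF dom, of 0] domA_base[OF dom] by simp
    from integral_equation_periodic_abs_0_le[OF F w eq \<mu> this N]
    have "\<bar>w 0\<bar> \<le> M / Z * L1norm f" using Z unfolding M_def Z_def by (simp add: field_simps)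
    then have w0: "\<bar>w 0\<bar> + L1norm f \<le> (1 + M / Z) * L1norm f" by (simp add: algebra_simps)
    have "\<bar>w x\<bar> \<le> (\<bar>w 0\<bar> + L1norm f) * M"
      using integral_equation_abs_le[OF F w eq N x] unfolding M_def .
    also have "\<dots> \<le> (1 + M / Z) * L1norm f * M" by (rule mult_right_mono[OF w0 M])
    finally show "\<bar>w x\<bar> \<le> (1 + M / Z) * M * L1norm f" by (simp add: mult_ac)
  qed
qed

lemma res_eq0_le_exp:
  assumes sol: "res_eq 0 \<mu> w d f" and f: "L2 f" and pos: "AE x in lebesgue_on {0..1}. 0 \<le> f x"
    and x: "x \<in> {0..1}" and y: "y \<in> {0..1}"
  shows "w y \<le> exp \<mu> * w x"
proof (rule periodic_growth_le_exp[OF _ _ x y])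
  note dom = res_eq_domA[OF sol]
  show "w 1 = w 0" using domA_periodic[OF dom, of 0] domA_base[OF dom] by simp
  show "w t \<le> exp (\<mu> * (t - s)) * w s" if "0 \<le> s" "s \<le> t" "t \<le> 1" for s t
    using prim_mono_if_nonneg[OF L2_imp_integrable01[OF f] pos] that
    by (intro integral_equation_growth[OF continuous_on_prim[OF L2_imp_integrable01[OF f]]
          domA_continuous[OF dom] res_eq0_integral_equation[OF sol f]]) auto
qed

lemma resolvent_0_positive:
  assumes \<mu>: "\<mu> > 0"
  shows "\<mu> \<in> resolvent_set 0 \<and> op_ge (Res 0 \<mu>) one_tensor_one"
proof
  show "\<mu> \<in> resolvent_set 0" using resolvent_set_0 \<mu> by simp
  show "op_ge (Res 0 \<mu>) one_tensor_one"
  proof (rule op_ge_Res_one_tensor_oneI[OF res_eq0_exists])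
    show "0 < 1 / (\<mu> * exp \<mu>)" using \<mu> by simp
    fix f w d and x :: real
    assume f: "L2 f" and pos: "AE x in lebesgue_on {0..1}. 0 \<le> f x"
      and sol: "res_eq 0 \<mu> w d f" and x: "x \<in> {0..1}"
    have Iw: "integrable01 w"
      by (rule continuous_imp_integrable_real[OF domA_continuous[OF res_eq_domA[OF sol]]])
    have "prim w 1 \<le> integral\<^sup>L (lebesgue_on {0..1}) (\<lambda>_::real. exp \<mu> * w x)"
      by (rule Bochner_Integration.integral_mono[OF Iw]) (use res_eq0_le_exp[OF sol f pos x] in auto)
    then have "prim f 1 / \<mu> \<le> exp \<mu> * w x" using res_eq_mean[OF sol f] \<mu> by simp
    then show "1 / (\<mu> * exp \<mu>) * prim f 1 \<le> w x" using \<mu> by (simp add: field_simps)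
  qed (use \<mu> in simp)
qed

lemma resolvent_0_negative:
  assumes \<mu>: "\<mu> < 0"
  shows "\<mu> \<in> resolvent_set 0 \<and> op_ge (\<lambda>f x. - one_tensor_one f x) (Res 0 \<mu>)"
proof
  show "\<mu> \<in> resolvent_set 0" using resolvent_set_0 \<mu> by simp
  show "op_ge (\<lambda>f x. - one_tensor_one f x) (Res 0 \<mu>)"
  proof (rule op_ge_neg_one_tensor_one_ResI[OF res_eq0_exists])
    show "0 < - \<mu> * exp (- \<mu>)" using \<mu> by (simp add: mult_neg_pos)
    fix f w d and x :: real
    assume f: "L2 f" and pos: "AE x in lebesgue_on {0..1}. 0 \<le> f x"
      and sol: "res_eq 0 \<mu> w d f" and x: "x \<in> {0..1}"
    have Iw: "integrable01 w"
      by (rule continuous_imp_integrable_real[OF domA_continuous[OF res_eq_domA[OF sol]]])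
    have "integral\<^sup>L (lebesgue_on {0..1}) (\<lambda>_::real. w x) \<le> integral\<^sup>L (lebesgue_on {0..1}) (\<lambda>y. exp \<mu> * w y)"
      by (rule Bochner_Integration.integral_mono[OF _ integrable_mult_right[OF Iw]])
        (use res_eq0_le_exp[OF sol f pos _ x] in auto)
    then have "w x \<le> exp \<mu> * (prim f 1 / \<mu>)" using res_eq_mean[OF sol f] \<mu> by simp
    then have "- \<mu> * exp (- \<mu>) * w x \<le> - \<mu> * exp (- \<mu>) * (exp \<mu> * (prim f 1 / \<mu>))"
      using \<mu> by (intro mult_left_mono) (simp_all add: mult_nonpos_nonneg)
    then show "- \<mu> * exp (- \<mu>) * w x \<le> - prim f 1" using \<mu> by (simp add: exp_minus field_simps)
  qed (use \<mu> in simp)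
qed

theorem theorem6p9:
  fixes l :: nat
  shows "(\<exists>\<epsilon>>0. \<forall>\<mu>\<in>{0<..<\<epsilon>}. \<mu> \<in> resolvent_set l \<and> op_ge (Res l \<mu>) one_tensor_one)
       \<and> (\<exists>\<epsilon>>0. \<forall>\<mu>\<in>{-\<epsilon><..<0}. \<mu> \<in> resolvent_set l \<and>
              op_ge (\<lambda>f x. - one_tensor_one f x) (Res l \<mu>))
       \<and> (l = 0 \<longrightarrow>
            (\<forall>\<mu>>0. \<mu> \<in> resolvent_set l \<and> op_ge (Res l \<mu>) one_tensor_one)
          \<and> (\<forall>\<mu><0. \<mu> \<in> resolvent_set l \<and> op_ge (\<lambda>f x. - one_tensor_one f x) (Res l \<mu>)))"
  using small_positive_resolvent[of l] small_negative_resolvent[of l]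
    resolvent_0_positive resolvent_0_negative by blast

end
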